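(* Let $n$ be a positive integer, $\mathbf 1=(1,\dots,1)\in\mathbb N^n$ and $\mathbf b=(0,1,\dots,1)\in\mathbb N^n$. Then $$\sum_{m\ge0}v^{(n,m)}(\mathbf 1,\mathbf b)x^m=\frac{\sum_{k=1}^nA(n,k)x^{k-1}}{(1-x)^{n+1}}.$$
   Context: For $m\ge1$, $v^{(n,m)}(\mathbf a,\mathbf b)$ is the number of vertices of the flow polytope $\mathcal F_{G(n,m)}(\mathbf a,\mathbf b)$, where $G(n,m)$ has vertex set $\{(i,j):1\le i\le n,0\le j\le m\}\cup\{s\}$ and edges $((i,j),(i,j+1))$ ($1\le i\le n$, $0\le j\le m-1$), $((i,j),(i+1,j))$ ($1\le i\le n-1$, $0\le j\le m$), $((n,j),s)$ ($0\le j\le m$), and the polytope consists of nonnegative real edge weightings with outflow minus inflow $a_i$ at $(i,0)$, $-b_i$ at $(i,m)$, $-\sum a_i+\sum b_i$ at $s$, $0$ elsewhere; the $m=0$ coefficient is taken to be $1$. $A(n,k)$ is the Eulerian number: the number of permutations of $\{1,\dots,n\}$ with exactly $k-1$ descents (positions $i$ with $w_i>w_{i+1}$). *)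

theory Defs
  imports "HOL-Analysis.Analysis" "HOL-Analysis.Finite_Function_Topology" "HOL-Computational_Algebra.Formal_Power_Series"
    "HOL-Combinatorics.Permutations"
begin

datatype gvert = Grid nat nat | Sink

definition G_edges :: "nat \<Rightarrow> nat \<Rightarrow> (gvert \<times> gvert) set" where
  "G_edges n m =
     {(Grid i j, Grid i (j+1)) | i j. 1 \<le> i \<and> i \<le> n \<and> j < m}
   \<union> {(Grid i j, Grid (i+1) j) | i j. 1 \<le> i \<and> i \<le> n - 1 \<and> j \<le> m}
   \<union> {(Grid n j, Sink) | j. j \<le> m}"

definition G_verts :: "nat \<Rightarrow> nat \<Rightarrow> gvert set" where
  "G_verts n m = {Grid i j | i j. 1 \<le> i \<and> i \<le> n \<and> j \<le> m} \<union> {Sink}"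

definition netflow_req :: "nat \<Rightarrow> nat \<Rightarrow> (nat \<Rightarrow> real) \<Rightarrow> (nat \<Rightarrow> real) \<Rightarrow> gvert \<Rightarrow> real" where
  "netflow_req n m a b v =
     (case v of
        Sink \<Rightarrow> - (\<Sum>i=1..n. a i) + (\<Sum>i=1..n. b i)
      | Grid i j \<Rightarrow> (if j = 0 then a i else if j = m then - b i else 0))"

definition flow_polytope :: "nat \<Rightarrow> nat \<Rightarrow> (nat \<Rightarrow> real) \<Rightarrow> (nat \<Rightarrow> real)
    \<Rightarrow> ((gvert \<times> gvert, real) poly_mapping) set" where
  "flow_polytope n m a b =
     {f. (\<forall>e. e \<notin> G_edges n m \<longrightarrow> Poly_Mapping.lookup f e = 0)
       \<and> (\<forall>e\<in>G_edges n m. 0 \<le> Poly_Mapping.lookup f e)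
       \<and> (\<forall>v\<in>G_verts n m.
            (\<Sum>e\<in>{e\<in>G_edges n m. fst e = v}. Poly_Mapping.lookup f e)
          - (\<Sum>e\<in>{e\<in>G_edges n m. snd e = v}. Poly_Mapping.lookup f e) = netflow_req n m a b v)}"

text \<open>Number of vertices v^(n,m)(a,b); the m = 0 coefficient is 1 by convention.\<close>
definition num_vertices :: "nat \<Rightarrow> nat \<Rightarrow> (nat \<Rightarrow> real) \<Rightarrow> (nat \<Rightarrow> real) \<Rightarrow> nat" where
  "num_vertices n m a b =
     (if m = 0 then 1 else card {f. f extreme_point_of flow_polytope n m a b})"

definition eulerian :: "nat \<Rightarrow> nat \<Rightarrow> nat" where
  "eulerian n k = card {w. w permutes {1..n} \<and>
      card {i. 1 \<le> i \<and> i < n \<and> w i > w (i+1)} = k - 1}"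

end

theory Submission
  imports Defs "HOL-Combinatorics.Multiset_Permutations"
begin

text \<open>
  Flow conservation along row \<open>i\<close> of \<open>G(n,m)\<close> forces the flow on the horizontal edge
  \<open>(i,j) \<rightarrow> (i,j+1)\<close> to be \<open>1 + Y(i-1,j) - Y(i,j)\<close>, where \<open>Y(i,j)\<close> is the total flow on the
  vertical edges leaving \<open>(i,0), \<dots>, (i,j)\<close> and \<open>Y(0,j) = 0\<close>; it also forces the vertical
  flows of every row to sum to 1. Hence the vertical flows identify the polytope linearly with a
  product of \<open>n\<close> standard \<open>m\<close>-simplices, which has \<open>(m+1)^n\<close> vertices.

  It remains to show \<open>\<Sum>\<^sub>m (m+1)^n x^m = A\<^sub>n(x) / (1-x)^(n+1)\<close>. Inserting \<open>n+1\<close> into a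
  permutation of \<open>{1..n}\<close> keeps the number of descents iff it goes to the end or into a descent,
  which gives \<open>A\<^sub>n\<^sub>+\<^sub>1 = (1 + n x) A\<^sub>n + x (1-x) A\<^sub>n'\<close>; this matches
  \<open>\<Sum>\<^sub>m (m+1)^(n+1) x^m = (x \<Sum>\<^sub>m (m+1)^n x^m)'\<close>, and induction on \<open>n\<close> concludes.
\<close>

section \<open>Descents and Eulerian numbers\<close>

fun descents :: "'a::linorder list \<Rightarrow> nat" where
  "descents (x # y # xs) = (if y < x then 1 else 0) + descents (y # xs)"
| "descents _ = 0"

definition descent_set :: "'a::linorder list \<Rightarrow> nat set" where
  "descent_set xs = {i. Suc i < length xs \<and> xs ! Suc i < xs ! i}"

lemma descents_Cons: "descents (x # xs) = (if xs \<noteq> [] \<and> hd xs < x then 1 else 0) + descents xs"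
  by (cases xs) auto

lemma descents_append:
  "descents (xs @ ys) =
     descents xs + descents ys + (if xs \<noteq> [] \<and> ys \<noteq> [] \<and> hd ys < last xs then 1 else 0)"
  by (induction xs) (auto simp: descents_Cons)

lemma descents_le_length: "descents xs \<le> length xs - 1"
  by (induction xs rule: descents.induct) auto

lemma finite_descent_set [simp]: "finite (descent_set xs)"
  by (rule finite_subset[of _ "{..<length xs}"]) (auto simp: descent_set_def)

lemma card_descent_set: "card (descent_set xs) = descents xs"
proof (induction xs rule: descents.induct)
  case (1 x y xs)
  have "descent_set (x # y # xs) = (if y < x then {0} else {}) \<union> Suc ` descent_set (y # xs)"
    by (auto simp: descent_set_def less_Suc_eq_0_disj)
  then show ?case
    using "1" by (simp add: card_image card_insert_if image_iff)
qed (simp_all add: descent_set_def)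

definition insert_at :: "nat \<Rightarrow> 'a \<Rightarrow> 'a list \<Rightarrow> 'a list" where
  "insert_at p x xs = take p xs @ x # drop p xs"

lemma descents_insert_at_max:
  assumes "\<forall>y\<in>set xs. y < x" "p \<le> length xs"
  shows "descents (insert_at p x xs) =
    descents xs + (if p < length xs \<and> \<not> (0 < p \<and> xs ! p < xs ! (p - 1)) then 1 else 0)"
proof -
  have "\<not> x < last (take p xs)" if "take p xs \<noteq> []"
    using assms(1) in_set_takeD[OF last_in_set[OF that]] by (meson less_asym)
  then have ins: "descents (insert_at p x xs) = descents (take p xs) + descents (drop p xs)
      + (if p < length xs then 1 else 0)"
    using assms by (auto simp: insert_at_def descents_append descents_Cons hd_drop_conv_nth)
  have "last (take p xs) = xs ! (p - 1)" if "0 < p"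
    using that assms(2) by (subst last_conv_nth) auto
  then have "descents xs = descents (take p xs) + descents (drop p xs)
      + (if 0 < p \<and> p < length xs \<and> xs ! p < xs ! (p - 1) then 1 else 0)"
    using descents_append[of "take p xs" "drop p xs"] assms(2) by (auto simp: hd_drop_conv_nth)
  with ins show ?thesis by auto
qed

lemma card_insert_at_max_descents:
  assumes "\<forall>y\<in>set xs. y < x"
  shows "card {p\<in>{..length xs}. descents (insert_at p x xs) = d} =
    (if d = descents xs then descents xs + 1
     else if d = Suc (descents xs) then length xs - descents xs else 0)"
proof -
  define K where "K = insert (length xs) (Suc ` descent_set xs)"
  have K_sub: "K \<subseteq> {..length xs}"
    by (auto simp: K_def descent_set_def)
  have "finite K"
    by (simp add: K_def)
  have "length xs \<notin> Suc ` descent_set xs"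
    by (auto simp: descent_set_def)
  then have card_K: "card K = descents xs + 1"
    by (simp add: K_def card_image card_descent_set)
  have "descents (insert_at p x xs) = descents xs + (if p \<in> K then 0 else 1)" if "p \<le> length xs" for p
    using descents_insert_at_max[OF assms that] that
    by (cases p) (auto simp: K_def descent_set_def)
  then have "{p\<in>{..length xs}. descents (insert_at p x xs) = d} =
      (if d = descents xs then K else if d = Suc (descents xs) then {..length xs} - K else {})"
    using K_sub by (auto split: if_splits)
  then show ?thesis
    using K_sub \<open>finite K\<close> card_K by (simp add: card_Diff_subset)
qed

lemma mset_insert_at: "mset (insert_at p x xs) = mset (x # xs)"
proof -
  have "mset xs = mset (take p xs) + mset (drop p xs)"
    by (metis append_take_drop_id mset_append)
  then show ?thesis by (simp add: insert_at_def)
qed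

lemma set_insert_at [simp]: "set (insert_at p x xs) = insert x (set xs)"
  using mset_eq_setD[OF mset_insert_at] by simp

lemma distinct_insert_at [simp]: "distinct (insert_at p x xs) \<longleftrightarrow> x \<notin> set xs \<and> distinct xs"
  using mset_eq_imp_distinct_iff[OF mset_insert_at] by simp

lemma insert_at_inject:
  assumes "x \<notin> set xs" "x \<notin> set ys" "p \<le> length xs" "q \<le> length ys"
    and "insert_at p x xs = insert_at q x ys"
  shows "xs = ys \<and> p = q"
proof -
  have "remove1 x (insert_at p x xs) = xs" "takeWhile (\<lambda>y. y \<noteq> x) (insert_at p x xs) = take p xs"
    if "x \<notin> set xs" for p xs
    using that by (auto simp: insert_at_def remove1_append takeWhile_append dest: in_set_takeD in_set_dropD)
  with assms show ?thesis
    by (metis length_take min.absorb2)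
qed

lemma bij_betw_insert_at:
  assumes "x \<notin> A"
  shows "bij_betw (\<lambda>(xs, p). insert_at p x xs)
    (SIGMA xs:permutations_of_set A. {..length xs}) (permutations_of_set (insert x A))"
proof (rule bij_betw_imageI)
  show "inj_on (\<lambda>(xs, p). insert_at p x xs) (SIGMA xs:permutations_of_set A. {..length xs})"
    using assms by (auto intro!: inj_onI dest: insert_at_inject permutations_of_setD)
  show "(\<lambda>(xs, p). insert_at p x xs) ` (SIGMA xs:permutations_of_set A. {..length xs}) =
      permutations_of_set (insert x A)"
  proof (intro equalityI subsetI)
    fix r assume "r \<in> (\<lambda>(xs, p). insert_at p x xs) ` (SIGMA xs:permutations_of_set A. {..length xs})"
    then show "r \<in> permutations_of_set (insert x A)"
      using assms by (auto simp: permutations_of_set_def)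
  next
    fix r assume r: "r \<in> permutations_of_set (insert x A)"
    then obtain us vs where "r = us @ x # vs"
      by (metis insertI1 permutations_of_setD(1) split_list)
    then have "us @ vs \<in> permutations_of_set A" "r = insert_at (length us) x (us @ vs)"
      using r assms by (auto simp: permutations_of_set_def insert_at_def)
    then show "r \<in> (\<lambda>(xs, p). insert_at p x xs) ` (SIGMA xs:permutations_of_set A. {..length xs})"
      by (intro image_eqI[of _ _ "(us @ vs, length us)"]) auto
  qed
qed

definition descent_count :: "nat \<Rightarrow> nat \<Rightarrow> nat" where
  "descent_count n d = card {xs \<in> permutations_of_set {1..n}. descents xs = d}"

lemma descent_count_Suc_eq_sum:
  "descent_count (Suc n) d = (\<Sum>xs\<in>permutations_of_set {1..n}.
      card {p\<in>{..length xs}. descents (insert_at p (Suc n) xs) = d})"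
proof -
  let ?S = "SIGMA xs:permutations_of_set {1..n}. {..length xs}"
  have "bij_betw (\<lambda>(xs, p). insert_at p (Suc n) xs)
      {s \<in> ?S. descents (case s of (xs, p) \<Rightarrow> insert_at p (Suc n) xs) = d}
      {r \<in> permutations_of_set (insert (Suc n) {1..n}). descents r = d}"
    by (rule bij_betw_Collect[OF bij_betw_insert_at]) auto
  moreover have "{s \<in> ?S. descents (case s of (xs, p) \<Rightarrow> insert_at p (Suc n) xs) = d} =
      (SIGMA xs:permutations_of_set {1..n}. {p\<in>{..length xs}. descents (insert_at p (Suc n) xs) = d})"
    by auto
  moreover have "insert (Suc n) {1..n} = {1..Suc n}"
    by auto
  ultimately show ?thesis
    by (simp add: descent_count_def bij_betw_same_card[symmetric])
qed

lemma descent_count_Suc: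
  shows "descent_count (Suc n) 0 = descent_count n 0"
    and "descent_count (Suc n) (Suc d) = (d + 2) * descent_count n (Suc d) + (n - d) * descent_count n d"
proof -
  let ?P = "permutations_of_set {1..n}"
  have pos: "card {p\<in>{..length xs}. descents (insert_at p (Suc n) xs) = e} =
      (if descents xs = e then e + 1 else 0) + (if Suc (descents xs) = e then Suc n - e else 0)"
    if "xs \<in> ?P" for xs e
  proof -
    have "length xs = n" "\<forall>y\<in>set xs. y < Suc n"
      using that by (auto simp: length_finite_permutations_of_set dest: permutations_of_setD)
    then show ?thesis
      using card_insert_at_max_descents[of xs "Suc n" e] by auto
  qed
  have "descent_count (Suc n) e =
      (e + 1) * descent_count n e + (Suc n - e) * card {xs\<in>?P. Suc (descents xs) = e}" for e
  proof -
    have "descent_count (Suc n) e = (\<Sum>xs\<in>?P.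
        (if descents xs = e then e + 1 else 0) + (if Suc (descents xs) = e then Suc n - e else 0))"
      unfolding descent_count_Suc_eq_sum by (rule sum.cong[OF refl]) (rule pos)
    then show ?thesis
      by (simp add: sum.distrib sum.inter_filter[symmetric] descent_count_def)
  qed
  then show "descent_count (Suc n) 0 = descent_count n 0"
    and "descent_count (Suc n) (Suc d) = (d + 2) * descent_count n (Suc d) + (n - d) * descent_count n d"
    by (simp_all add: descent_count_def)
qed

lemma descent_count_eq_0:
  assumes "n \<le> d" "d \<noteq> 0"
  shows "descent_count n d = 0"
proof -
  have "descents xs \<noteq> d" if "xs \<in> permutations_of_set {1..n}" for xs
    using descents_le_length[of xs] length_finite_permutations_of_set[OF that] assms by simp
  then show ?thesis
    by (simp add: descent_count_def)
qed

lemma descent_count_0: "descent_count 0 d = (if d = 0 then 1 else 0)"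
proof -
  have "{xs \<in> permutations_of_set {1..0::nat}. descents xs = d} = (if d = 0 then {[]} else {})"
    by auto
  then show ?thesis
    by (simp add: descent_count_def)
qed

definition eulerian_fps :: "nat \<Rightarrow> 'a::comm_ring_1 fps" where
  "eulerian_fps n = Abs_fps (\<lambda>d. of_nat (descent_count n d))"

definition succ_pow_fps :: "nat \<Rightarrow> 'a::comm_ring_1 fps" where
  "succ_pow_fps n = Abs_fps (\<lambda>m. of_nat (Suc m ^ n))"

lemma eulerian_fps_Suc:
  "eulerian_fps (Suc n) = (1 + of_nat n * fps_X) * eulerian_fps n
      + fps_X * (1 - fps_X) * fps_deriv (eulerian_fps n :: 'a::comm_ring_1 fps)"
proof (rule fps_ext)
  fix k
  show "fps_nth (eulerian_fps (Suc n)) k = fps_nth ((1 + of_nat n * fps_X) * eulerian_fps n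
      + fps_X * (1 - fps_X) * fps_deriv (eulerian_fps n :: 'a fps)) k"
  proof (cases k)
    case 0
    then show ?thesis by (simp add: eulerian_fps_def descent_count_Suc)
  next
    case (Suc d)
    have "of_nat ((n - d) * descent_count n d) =
        (of_nat n - of_nat d) * (of_nat (descent_count n d) :: 'a)"
      by (cases "d \<le> n") (simp_all add: of_nat_diff descent_count_eq_0)
    then have "of_nat (descent_count (Suc n) (Suc d)) = of_nat (d + 2) * of_nat (descent_count n (Suc d))
        + (of_nat n - of_nat d) * (of_nat (descent_count n d) :: 'a)"
      by (simp only: descent_count_Suc of_nat_add of_nat_mult)
    with Suc show ?thesis
      by (auto simp: eulerian_fps_def algebra_simps)
  qed
qed

lemma succ_pow_fps_Suc: "succ_pow_fps (Suc n) = fps_deriv (fps_X * succ_pow_fps n)"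
  by (rule fps_ext) (simp add: succ_pow_fps_def)

lemma succ_pow_fps_times_power:
  "succ_pow_fps n * (1 - fps_X) ^ Suc n = (eulerian_fps n :: 'a::comm_ring_1 fps)"
proof (induction n)
  case 0
  show ?case
    by (rule fps_ext) (simp add: succ_pow_fps_def eulerian_fps_def descent_count_0 algebra_simps)
next
  case (Suc n)
  define S :: "'a fps" where "S = succ_pow_fps n"
  define D :: "'a fps" where "D = 1 - fps_X"
  have IH: "eulerian_fps n = S * D ^ Suc n"
    using Suc.IH by (simp add: S_def D_def)
  have "fps_deriv D = -1"
    by (simp add: D_def)
  then have deriv_power: "fps_deriv (D ^ Suc n) = - (of_nat (Suc n) * D ^ n)"
    unfolding fps_deriv_power' by (simp add: algebra_simps)
  have deriv: "fps_deriv (eulerian_fps n) = fps_deriv S * D ^ Suc n - of_nat (Suc n) * S * D ^ n"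
    unfolding IH fps_deriv_mult deriv_power by (simp add: algebra_simps)
  have "succ_pow_fps (Suc n) * D ^ Suc (Suc n) = (S + fps_X * fps_deriv S) * D ^ Suc (Suc n)"
    by (simp add: succ_pow_fps_Suc S_def algebra_simps)
  also have "\<dots> = (1 + of_nat n * fps_X) * (S * D ^ Suc n)
      + fps_X * D * (fps_deriv S * D ^ Suc n - of_nat (Suc n) * S * D ^ n)"
    by (simp add: D_def algebra_simps)
  also have "\<dots> = eulerian_fps (Suc n)"
    unfolding eulerian_fps_Suc deriv unfolding IH D_def ..
  finally show ?case
    by (simp add: D_def)
qed

lemma bij_betw_map_permutes:
  assumes "distinct xs"
  shows "bij_betw (\<lambda>w. map w xs) {w. w permutes set xs} (permutations_of_set (set xs))"
proof -
  have inj: "inj_on (\<lambda>w. map w xs) {w. w permutes set xs}"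
  proof (rule inj_onI, rule ext)
    fix w w' x
    assume "w \<in> {w. w permutes set xs}" "w' \<in> {w. w permutes set xs}" "map w xs = map w' xs"
    then show "w x = w' x"
      by (cases "x \<in> set xs") (auto simp: permutes_not_in map_eq_conv)
  qed
  have sub: "(\<lambda>w. map w xs) ` {w. w permutes set xs} \<subseteq> permutations_of_set (set xs)"
    using assms by (auto simp: permutations_of_set_def permutes_image distinct_map permutes_inj_on)
  have "card ((\<lambda>w. map w xs) ` {w. w permutes set xs}) = card (permutations_of_set (set xs))"
    using card_image[OF inj] card_permutations[of "set xs"] by simp
  with inj sub show ?thesis
    by (simp add: bij_betw_def card_subset_eq)
qed

lemma card_descents_permutes:
  "card {i. 1 \<le> i \<and> i < n \<and> w i > w (i+1)} = descents (map w [1..<Suc n])"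
proof -
  have "descent_set (map w [1..<Suc n]) = {i. Suc i < n \<and> w (Suc (Suc i)) < w (Suc i)}"
    by (auto simp: descent_set_def simp del: upt_Suc)
  then have "{i. 1 \<le> i \<and> i < n \<and> w i > w (i + 1)} = Suc ` descent_set (map w [1..<Suc n])"
    by (auto simp: image_iff Suc_le_eq gr0_conv_Suc)
  then show ?thesis
    by (simp add: card_image card_descent_set)
qed

lemma eulerian_eq_descent_count: "eulerian n k = descent_count n (k - 1)"
proof -
  have "bij_betw (\<lambda>w. map w [1..<Suc n]) {w. w permutes {1..n}} (permutations_of_set {1..n})"
    using bij_betw_map_permutes[OF distinct_upt, of 1 "Suc n"]
    unfolding set_upt atLeastLessThanSuc_atLeastAtMost .
  then have "bij_betw (\<lambda>w. map w [1..<Suc n])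
      {w \<in> {w. w permutes {1..n}}. descents (map w [1..<Suc n]) = k - 1}
      {xs \<in> permutations_of_set {1..n}. descents xs = k - 1}"
    by (rule bij_betw_Collect) simp
  then show ?thesis
    unfolding eulerian_def card_descents_permutes descent_count_def
    using bij_betw_same_card by fastforce
qed

lemma fps_of_poly_eulerian:
  assumes "1 \<le> n"
  shows "fps_of_poly (\<Sum>k=1..n. monom (real (eulerian n k)) (k - 1)) = eulerian_fps n"
proof (rule fps_ext)
  fix d
  have "coeff (\<Sum>k=1..n. monom (real (eulerian n k)) (k - 1)) d =
      (\<Sum>k\<in>{1..n}. if k - 1 = d then real (eulerian n k) else 0)"
    by (simp add: coeff_sum coeff_monom)
  also have "\<dots> = (\<Sum>k\<in>{1..n}. if k = Suc d then real (descent_count n d) else 0)"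
    by (rule sum.cong) (auto simp: eulerian_eq_descent_count)
  also have "\<dots> = (if Suc d \<in> {1..n} then real (descent_count n d) else 0)"
    by (rule sum.delta) simp
  also have "\<dots> = real (descent_count n d)"
    using assms descent_count_eq_0[of n d] by auto
  finally show "fps_nth (fps_of_poly (\<Sum>k=1..n. monom (real (eulerian n k)) (k - 1))) d =
      fps_nth (eulerian_fps n) d"
    by (simp add: eulerian_fps_def)
qed

section \<open>Extreme points of products of simplices\<close>

lemma lookup_scaleR [simp]:
  "Poly_Mapping.lookup (c *\<^sub>R y) p = c *\<^sub>R Poly_Mapping.lookup y p"
proof -
  have "finite {q. c *\<^sub>R Poly_Mapping.lookup y q \<noteq> 0}"
    by (rule finite_subset[OF _ finite_lookup[of y]]) auto
  then show ?thesis
    by (simp add: scaleR_poly_mapping_def)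
qed

lemma lookup_sum_single_image:
  assumes "finite A" "inj_on g A" "a \<in> A"
  shows "Poly_Mapping.lookup (\<Sum>x\<in>A. Poly_Mapping.single (g x) (c x)) (g a) = c a"
proof -
  have "(\<Sum>x\<in>A. c x when g x = g a) = (\<Sum>x\<in>A. if x = a then c x else 0)"
    using assms(2,3) by (intro sum.cong) (auto simp: when_def dest: inj_onD)
  then show ?thesis
    using assms(1,3) by (simp add: lookup_sum lookup_single)
qed

lemma lookup_sum_single_notin:
  "e \<notin> g ` A \<Longrightarrow> Poly_Mapping.lookup (\<Sum>x\<in>A. Poly_Mapping.single (g x) (c x)) e = 0"
  by (auto simp: lookup_sum lookup_single when_def intro!: sum.neutral)

lemma linear_lookup: "linear (\<lambda>y. Poly_Mapping.lookup y p)"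
  by (rule linearI) (simp_all add: lookup_add)

lemma extreme_points_of_linear_image:
  assumes g: "linear g" "inj_on g S" and "convex S"
  shows "{y. y extreme_point_of g ` S} = g ` {x. x extreme_point_of S}"
proof -
  have "g x \<in> open_segment (g a) (g b) \<longleftrightarrow> x \<in> open_segment a b"
    if "x \<in> S" "a \<in> S" "b \<in> S" for x a b
  proof -
    have "closed_segment a b \<subseteq> S"
      using \<open>convex S\<close> that(2,3) by (rule convex_contains_segment[THEN iffD1, rule_format])
    with that show ?thesis
      unfolding open_segment_def closed_segment_linear_image[OF g(1)]
      by (auto simp: inj_on_image_mem_iff[OF g(2)] dest: inj_onD[OF g(2)])
  qed
  then show ?thesis
    by (auto simp: extreme_point_of_def)
qed

lemma linear_image_eq_at_extreme_point:
  assumes "linear f" "f x extreme_point_of T" "f a \<in> T" "f b \<in> T" "x \<in> open_segment a b"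
  shows "f a = f b"
proof (rule ccontr)
  assume "f a \<noteq> f b"
  obtain u where "0 < u" "u < 1" "x = (1 - u) *\<^sub>R a + u *\<^sub>R b"
    using assms(5) by (auto simp: in_segment)
  then have "f x \<in> open_segment (f a) (f b)"
    using \<open>f a \<noteq> f b\<close> linear_add[OF assms(1)] linear_scale[OF assms(1)]
    by (auto simp: in_segment)
  then show False
    using assms(2-4) by (auto simp: extreme_point_of_def)
qed

definition simplex_product :: "'i set \<Rightarrow> 'j set \<Rightarrow> ('i \<times> 'j \<Rightarrow>\<^sub>0 real) set" where
  "simplex_product I J =
     {y. (\<forall>p. p \<notin> I \<times> J \<longrightarrow> Poly_Mapping.lookup y p = 0) \<and> (\<forall>p. 0 \<le> Poly_Mapping.lookup y p)
       \<and> (\<forall>i\<in>I. (\<Sum>j\<in>J. Poly_Mapping.lookup y (i, j)) = 1)}"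

definition simplex_vertex :: "'i set \<Rightarrow> ('i \<Rightarrow> 'j) \<Rightarrow> ('i \<times> 'j \<Rightarrow>\<^sub>0 real)" where
  "simplex_vertex I c = (\<Sum>i\<in>I. Poly_Mapping.single (i, c i) 1)"

lemma simplex_productD:
  assumes "y \<in> simplex_product I J"
  shows "p \<notin> I \<times> J \<Longrightarrow> Poly_Mapping.lookup y p = 0"
    and "0 \<le> Poly_Mapping.lookup y p"
    and "i \<in> I \<Longrightarrow> (\<Sum>j\<in>J. Poly_Mapping.lookup y (i, j)) = 1"
  using assms unfolding simplex_product_def by blast+

lemma lookup_simplex_vertex:
  assumes "finite I"
  shows "Poly_Mapping.lookup (simplex_vertex I c) (i, j) = (if i \<in> I \<and> j = c i then 1 else 0)"
proof -
  have "Poly_Mapping.lookup (simplex_vertex I c) (i, j) =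
      (\<Sum>x\<in>I. if x = i then (if j = c x then 1 else 0) else 0)"
    by (auto simp: simplex_vertex_def lookup_sum lookup_single when_def intro!: sum.cong)
  then show ?thesis
    using assms by simp
qed

lemma simplex_product_le_1:
  assumes "finite J" "y \<in> simplex_product I J"
  shows "Poly_Mapping.lookup y p \<le> 1"
proof (cases "p \<in> I \<times> J")
  case True
  then obtain i j where ij: "p = (i, j)" "i \<in> I" "j \<in> J"
    by blast
  have "Poly_Mapping.lookup y (i, j) \<le> (\<Sum>j'\<in>J. Poly_Mapping.lookup y (i, j'))"
    by (rule member_le_sum) (use assms ij simplex_productD in auto)
  with ij show ?thesis
    using simplex_productD(3)[OF assms(2)] by simp
next
  case False
  then show ?thesis
    using simplex_productD(1)[OF assms(2)] by simp
qed

lemma simplex_product_move_mass: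
  assumes y: "y \<in> simplex_product I J" and "i \<in> I" "j \<in> J" "j' \<in> J" "j \<noteq> j'"
    and t: "\<bar>t\<bar> \<le> Poly_Mapping.lookup y (i, j)" "\<bar>t\<bar> \<le> Poly_Mapping.lookup y (i, j')"
  shows "y + t *\<^sub>R (Poly_Mapping.single (i, j) 1 - Poly_Mapping.single (i, j') 1) \<in> simplex_product I J"
    (is "y + t *\<^sub>R ?\<delta> \<in> _")
proof -
  have lookup_\<delta>: "Poly_Mapping.lookup ?\<delta> q = (if q = (i, j) then 1 else if q = (i, j') then -1 else 0)" for q
    using \<open>j \<noteq> j'\<close> by (auto simp: lookup_minus lookup_single when_def)
  have "finite J"
    using simplex_productD(3)[OF y \<open>i \<in> I\<close>] by (metis sum.infinite zero_neq_one)
  then have "(\<Sum>k\<in>J. Poly_Mapping.lookup (Poly_Mapping.single (i, l) (1::real)) (i', k)) = (if i' = i then 1 else 0)"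
    if "l \<in> J" for i' l
    using that by (cases "i' = i") (simp_all add: lookup_single when_def)
  then have row_\<delta>: "(\<Sum>k\<in>J. Poly_Mapping.lookup ?\<delta> (i', k)) = 0" for i'
    using assms(3,4) by (simp add: lookup_minus sum_subtractf)
  show ?thesis
    unfolding simplex_product_def
  proof (intro CollectI conjI allI impI ballI)
    fix p assume "p \<notin> I \<times> J"
    then show "Poly_Mapping.lookup (y + t *\<^sub>R ?\<delta>) p = 0"
      using assms(2-4) simplex_productD(1)[OF y] by (auto simp: lookup_add lookup_\<delta>)
  next
    fix p
    show "0 \<le> Poly_Mapping.lookup (y + t *\<^sub>R ?\<delta>) p"
      using t simplex_productD(2)[OF y, of p] by (auto simp: lookup_add lookup_\<delta>)
  next
    fix i' assume "i' \<in> I"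
    then show "(\<Sum>k\<in>J. Poly_Mapping.lookup (y + t *\<^sub>R ?\<delta>) (i', k)) = 1"
      using simplex_productD(3)[OF y] row_\<delta> by (simp add: lookup_add sum.distrib flip: sum_distrib_left)
  qed
qed

lemma extreme_point_of_simplex_product_lookup:
  fixes I :: "'i set" and J :: "'j set"
  assumes "finite J" and ext: "y extreme_point_of simplex_product I J"
  shows "Poly_Mapping.lookup y (i, j) \<in> {0, 1}"
proof (rule ccontr)
  assume frac: "Poly_Mapping.lookup y (i, j) \<notin> {0, 1}"
  have y: "y \<in> simplex_product I J"
    using ext by (simp add: extreme_point_of_def)
  then have ij: "i \<in> I" "j \<in> J"
    using frac simplex_productD(1) by fastforce+
  have "\<exists>j'\<in>J - {j}. Poly_Mapping.lookup y (i, j') \<noteq> 0"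
  proof (rule ccontr)
    assume "\<not> ?thesis"
    then have "(\<Sum>k\<in>J. Poly_Mapping.lookup y (i, k)) = Poly_Mapping.lookup y (i, j)"
      using sum.remove[OF assms(1) ij(2), of "\<lambda>k. Poly_Mapping.lookup y (i, k)"] by simp
    with frac show False
      using simplex_productD(3)[OF y ij(1)] by simp
  qed
  then obtain j' where j': "j' \<in> J" "j' \<noteq> j" "0 < Poly_Mapping.lookup y (i, j')"
    using simplex_productD(2)[OF y] by (auto simp: order.order_iff_strict)
  \<comment> \<open>\<open>y\<close> is the midpoint of the two points obtained by moving mass \<open>\<epsilon>\<close> between \<open>(i,j)\<close> and \<open>(i,j')\<close>\<close>
  define \<epsilon> where "\<epsilon> = min (Poly_Mapping.lookup y (i, j)) (Poly_Mapping.lookup y (i, j'))"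
  define \<delta> :: "'i \<times> 'j \<Rightarrow>\<^sub>0 real" where
    "\<delta> = Poly_Mapping.single (i, j) 1 - Poly_Mapping.single (i, j') 1"
  have "0 < \<epsilon>"
    using frac j' simplex_productD(2)[OF y, of "(i, j)"] by (auto simp: \<epsilon>_def)
  have mem: "y + t *\<^sub>R \<delta> \<in> simplex_product I J" if "\<bar>t\<bar> \<le> \<epsilon>" for t
    unfolding \<delta>_def using that j' by (intro simplex_product_move_mass[OF y ij]) (auto simp: \<epsilon>_def)
  have "y \<in> open_segment (y + (- \<epsilon>) *\<^sub>R \<delta>) (y + \<epsilon> *\<^sub>R \<delta>)"
    unfolding in_segment
  proof (intro conjI exI[of _ "1/2"])
    have "Poly_Mapping.lookup \<delta> (i, j) = 1"
      using j'(2) by (simp add: \<delta>_def lookup_minus lookup_single)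
    then have "Poly_Mapping.lookup (y + (- \<epsilon>) *\<^sub>R \<delta>) (i, j) \<noteq> Poly_Mapping.lookup (y + \<epsilon> *\<^sub>R \<delta>) (i, j)"
      using \<open>0 < \<epsilon>\<close> by (simp add: lookup_add lookup_minus)
    then show "y + (- \<epsilon>) *\<^sub>R \<delta> \<noteq> y + \<epsilon> *\<^sub>R \<delta>"
      by metis
    show "y = (1 - 1/2) *\<^sub>R (y + (- \<epsilon>) *\<^sub>R \<delta>) + (1/2) *\<^sub>R (y + \<epsilon> *\<^sub>R \<delta>)"
      by (rule poly_mapping_eqI) (simp add: lookup_add algebra_simps)
  qed simp_all
  with ext mem[of "- \<epsilon>"] mem[of \<epsilon>] \<open>0 < \<epsilon>\<close> show False
    by (auto simp: extreme_point_of_def)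
qed

lemma extreme_point_of_simplex_productI:
  assumes "finite J" and y: "y \<in> simplex_product I J"
    and y01: "\<forall>i j. Poly_Mapping.lookup y (i, j) \<in> {0, 1}"
  shows "y extreme_point_of simplex_product I J"
proof -
  have "a = b" if ab: "a \<in> simplex_product I J" "b \<in> simplex_product I J" and "y \<in> open_segment a b" for a b
  proof (rule poly_mapping_eqI)
    fix p
    have "Poly_Mapping.lookup y p extreme_point_of closed_segment 0 1"
      using y01 by (cases p) (auto simp: extreme_point_of_segment)
    then have "Poly_Mapping.lookup y p extreme_point_of {0..1::real}"
      by (simp add: closed_segment_eq_real_ivl1)
    then show "Poly_Mapping.lookup a p = Poly_Mapping.lookup b p"
      by (rule linear_image_eq_at_extreme_point[OF linear_lookup _ _ _ that(3)])
        (simp_all add: simplex_productD(2)[OF ab(1)] simplex_productD(2)[OF ab(2)]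
          simplex_product_le_1[OF assms(1) ab(1)] simplex_product_le_1[OF assms(1) ab(2)])
  qed
  with y show ?thesis
    unfolding extreme_point_of_def by (metis empty_iff open_segment_idem)
qed

lemma simplex_product_unique_one:
  assumes "finite J" and y: "y \<in> simplex_product I J"
    and y01: "\<forall>i j. Poly_Mapping.lookup y (i, j) \<in> {0, 1}"
    and "i \<in> I"
  shows "\<exists>!j. j \<in> J \<and> Poly_Mapping.lookup y (i, j) = 1"
proof (rule ex_ex1I)
  obtain j where "j \<in> J" "Poly_Mapping.lookup y (i, j) \<noteq> 0"
    using simplex_productD(3)[OF y \<open>i \<in> I\<close>] by (metis sum.neutral zero_neq_one)
  then show "\<exists>j. j \<in> J \<and> Poly_Mapping.lookup y (i, j) = 1"
    using y01 by blast
next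
  fix j j' assume j: "j \<in> J \<and> Poly_Mapping.lookup y (i, j) = 1"
    and j': "j' \<in> J \<and> Poly_Mapping.lookup y (i, j') = 1"
  show "j = j'"
  proof (rule ccontr)
    assume "j \<noteq> j'"
    then have "(\<Sum>k\<in>{j, j'}. Poly_Mapping.lookup y (i, k)) = 2"
      using j j' by simp
    moreover have "(\<Sum>k\<in>{j, j'}. Poly_Mapping.lookup y (i, k)) \<le> (\<Sum>k\<in>J. Poly_Mapping.lookup y (i, k))"
      using assms(1) j j' simplex_productD(2)[OF y] by (intro sum_mono2) auto
    ultimately show False
      using simplex_productD(3)[OF y \<open>i \<in> I\<close>] by simp
  qed
qed

lemma extreme_points_simplex_product:
  assumes "finite I" "finite J"
  shows "{y. y extreme_point_of simplex_product I J} = simplex_vertex I ` (I \<rightarrow>\<^sub>E J)"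
proof (intro equalityI subsetI)
  fix y assume "y \<in> {y. y extreme_point_of simplex_product I J}"
  then have ext: "y extreme_point_of simplex_product I J"
    by simp
  then have y: "y \<in> simplex_product I J"
    by (simp add: extreme_point_of_def)
  have y01: "\<forall>i j. Poly_Mapping.lookup y (i, j) \<in> {0, 1}"
    using extreme_point_of_simplex_product_lookup[OF assms(2) ext] by blast
  note unique = simplex_product_unique_one[OF assms(2) y y01]
  define c where "c = (\<lambda>i\<in>I. THE j. j \<in> J \<and> Poly_Mapping.lookup y (i, j) = 1)"
  have c: "c i \<in> J" "Poly_Mapping.lookup y (i, c i) = 1" if "i \<in> I" for i
    using theI'[OF unique[OF that]] that by (simp_all add: c_def)
  have "Poly_Mapping.lookup y (i, j) = Poly_Mapping.lookup (simplex_vertex I c) (i, j)" for i j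
    using c[of i] unique[of i] y01 simplex_productD(1)[OF y, of "(i, j)"]
    by (cases "i \<in> I \<and> j \<in> J") (auto simp: lookup_simplex_vertex[OF assms(1)])
  then have "y = simplex_vertex I c"
    by (intro poly_mapping_eqI) (metis surj_pair)
  moreover have "c \<in> I \<rightarrow>\<^sub>E J"
    using c by (auto simp: c_def)
  ultimately show "y \<in> simplex_vertex I ` (I \<rightarrow>\<^sub>E J)"
    by blast
next
  fix y assume "y \<in> simplex_vertex I ` (I \<rightarrow>\<^sub>E J)"
  then obtain c where c: "c \<in> I \<rightarrow>\<^sub>E J" and y: "y = simplex_vertex I c"
    by blast
  have "y \<in> simplex_product I J"
    using c assms by (auto simp: simplex_product_def y lookup_simplex_vertex PiE_iff)
  moreover have "\<forall>i j. Poly_Mapping.lookup y (i, j) \<in> {0, 1}"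
    using assms(1) by (auto simp: y lookup_simplex_vertex)
  ultimately show "y \<in> {y. y extreme_point_of simplex_product I J}"
    using extreme_point_of_simplex_productI[OF assms(2)] by blast
qed

lemma card_extreme_points_simplex_product:
  assumes "finite I" "finite J"
  shows "card {y. y extreme_point_of simplex_product I J} = card J ^ card I"
proof -
  have "inj_on (simplex_vertex I) (I \<rightarrow>\<^sub>E J)"
  proof (rule inj_onI)
    fix c c' assume c: "c \<in> I \<rightarrow>\<^sub>E J" "c' \<in> I \<rightarrow>\<^sub>E J" "simplex_vertex I c = simplex_vertex I c'"
    show "c = c'"
    proof (rule PiE_ext[OF c(1,2)])
      fix i assume "i \<in> I"
      have "Poly_Mapping.lookup (simplex_vertex I c) (i, c i) = Poly_Mapping.lookup (simplex_vertex I c') (i, c i)"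
        using c(3) by simp
      then show "c i = c' i"
        using \<open>i \<in> I\<close> by (simp add: lookup_simplex_vertex[OF assms(1)] split: if_splits)
    qed
  qed
  then show ?thesis
    using assms by (simp add: extreme_points_simplex_product card_image card_PiE)
qed

section \<open>The flow polytope of the grid graph\<close>

abbreviation grid_flow_polytope :: "nat \<Rightarrow> nat \<Rightarrow> (gvert \<times> gvert \<Rightarrow>\<^sub>0 real) set" where
  "grid_flow_polytope n m \<equiv> flow_polytope n m (\<lambda>i. 1) (\<lambda>i. if i = 1 then 0 else 1)"

definition horiz_edge :: "nat \<times> nat \<Rightarrow> gvert \<times> gvert" where
  "horiz_edge = (\<lambda>(i, j). (Grid i j, Grid i (Suc j)))"

definition vert_edge :: "nat \<Rightarrow> nat \<times> nat \<Rightarrow> gvert \<times> gvert" where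
  "vert_edge n = (\<lambda>(i, j). (Grid i j, if i = n then Sink else Grid (Suc i) j))"

lemma horiz_edge_in_G_edges_iff [simp]:
  "horiz_edge (i, j) \<in> G_edges n m \<longleftrightarrow> 1 \<le> i \<and> i \<le> n \<and> j < m"
  by (auto simp: G_edges_def horiz_edge_def)

lemma vert_edge_in_G_edges_iff [simp]:
  "1 \<le> n \<Longrightarrow> vert_edge n (i, j) \<in> G_edges n m \<longleftrightarrow> 1 \<le> i \<and> i \<le> n \<and> j \<le> m"
  by (auto simp: G_edges_def vert_edge_def)

lemma horiz_edge_neq_vert_edge [simp]: "horiz_edge p \<noteq> vert_edge n q" "vert_edge n q \<noteq> horiz_edge p"
  by (auto simp: horiz_edge_def vert_edge_def split: prod.splits)

lemma inj_horiz_edge: "inj horiz_edge"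
  by (simp add: inj_def horiz_edge_def split_paired_all)

lemma inj_vert_edge: "inj (vert_edge n)"
  by (simp add: inj_def vert_edge_def split_paired_all)

lemma G_edges_eq:
  assumes "1 \<le> n"
  shows "G_edges n m = horiz_edge ` ({1..n} \<times> {..<m}) \<union> vert_edge n ` ({1..n} \<times> {..m})"
proof (intro equalityI subsetI)
  fix e assume "e \<in> G_edges n m"
  then show "e \<in> horiz_edge ` ({1..n} \<times> {..<m}) \<union> vert_edge n ` ({1..n} \<times> {..m})"
    unfolding G_edges_def
  proof (elim UnE CollectE exE conjE)
    fix i j assume "e = (Grid i j, Grid i (j + 1))" "1 \<le> i" "i \<le> n" "j < m"
    then have "e = horiz_edge (i, j)" "(i, j) \<in> {1..n} \<times> {..<m}"
      by (simp_all add: horiz_edge_def)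
    then show ?thesis
      by blast
  next
    fix i j assume "e = (Grid i j, Grid (i + 1) j)" "1 \<le> i" "i \<le> n - 1" "j \<le> m"
    then have "e = vert_edge n (i, j)" "(i, j) \<in> {1..n} \<times> {..m}"
      by (auto simp: vert_edge_def)
    then show ?thesis
      by blast
  next
    fix j assume "e = (Grid n j, Sink)" "j \<le> m"
    then have "e = vert_edge n (n, j)" "(n, j) \<in> {1..n} \<times> {..m}"
      using assms by (auto simp: vert_edge_def)
    then show ?thesis
      by blast
  qed
qed (use assms in auto)

definition net_outflow :: "nat \<Rightarrow> nat \<Rightarrow> (gvert \<times> gvert \<Rightarrow>\<^sub>0 real) \<Rightarrow> gvert \<Rightarrow> real" where
  "net_outflow n m f v =
     (\<Sum>e\<in>{e\<in>G_edges n m. fst e = v}. Poly_Mapping.lookup f e)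
   - (\<Sum>e\<in>{e\<in>G_edges n m. snd e = v}. Poly_Mapping.lookup f e)"

lemma flow_polytope_iff:
  "f \<in> flow_polytope n m a b \<longleftrightarrow>
     (\<forall>e. e \<notin> G_edges n m \<longrightarrow> Poly_Mapping.lookup f e = 0)
   \<and> (\<forall>e\<in>G_edges n m. 0 \<le> Poly_Mapping.lookup f e)
   \<and> (\<forall>v\<in>G_verts n m. net_outflow n m f v = netflow_req n m a b v)"
  by (simp add: flow_polytope_def net_outflow_def)

lemma flow_polytopeD:
  assumes "f \<in> flow_polytope n m a b"
  shows "e \<notin> G_edges n m \<Longrightarrow> Poly_Mapping.lookup f e = 0"
    and "e \<in> G_edges n m \<Longrightarrow> 0 \<le> Poly_Mapping.lookup f e"
    and "v \<in> G_verts n m \<Longrightarrow> net_outflow n m f v = netflow_req n m a b v"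
  using assms unfolding flow_polytope_iff by blast+

text \<open>The boundary cases need no case split because \<open>f\<close> vanishes off the edges:
  \<open>horiz_edge (i, m)\<close> and \<open>vert_edge n (0, j)\<close> are not edges.\<close>

lemma net_outflow_Grid:
  assumes n: "1 \<le> n" and supp: "\<forall>e. e \<notin> G_edges n m \<longrightarrow> Poly_Mapping.lookup f e = 0"
    and ij: "1 \<le> i" "i \<le> n" "j \<le> m"
  shows "net_outflow n m f (Grid i j) =
    Poly_Mapping.lookup f (horiz_edge (i, j)) + Poly_Mapping.lookup f (vert_edge n (i, j))
    - (if j = 0 then 0 else Poly_Mapping.lookup f (horiz_edge (i, j - 1)))
    - Poly_Mapping.lookup f (vert_edge n (i - 1, j))"
proof -
  have out: "{e\<in>G_edges n m. fst e = Grid i j} =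
      (if j < m then {horiz_edge (i, j)} else {}) \<union> {vert_edge n (i, j)}"
    using n ij by (auto simp: G_edges_def horiz_edge_def vert_edge_def)
  have "{e\<in>G_edges n m. snd e = Grid i j} =
      (if j = 0 then {} else {horiz_edge (i, j - 1)}) \<union> (if i = 1 then {} else {vert_edge n (i - 1, j)})"
    using n ij by (auto simp: G_edges_def horiz_edge_def vert_edge_def split: if_splits)
  moreover have "j < m \<or> Poly_Mapping.lookup f (horiz_edge (i, j)) = 0"
    "i \<noteq> 1 \<or> Poly_Mapping.lookup f (vert_edge n (i - 1, j)) = 0"
    using supp[rule_format, of "horiz_edge (i, j)"] supp[rule_format, of "vert_edge n (0, j)"] n
    by auto
  ultimately show ?thesis
    unfolding net_outflow_def out by (auto simp: sum.union_disjoint)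
qed

lemma net_outflow_Sink:
  assumes "1 \<le> n"
  shows "net_outflow n m f Sink = - (\<Sum>j\<le>m. Poly_Mapping.lookup f (vert_edge n (n, j)))"
proof -
  have out: "{e\<in>G_edges n m. fst e = Sink} = {}"
    by (auto simp: G_edges_def)
  have "{e\<in>G_edges n m. snd e = Sink} = (\<lambda>j. vert_edge n (n, j)) ` {..m}"
    using assms by (auto simp: G_edges_def vert_edge_def)
  moreover have "inj_on (\<lambda>j. vert_edge n (n, j)) {..m}"
    by (auto intro!: inj_onI dest: injD[OF inj_vert_edge])
  ultimately show ?thesis
    unfolding net_outflow_def out by (simp add: sum.reindex)
qed

lemma grid_flow_polytope_conservation:
  assumes n: "1 \<le> n" and f: "f \<in> grid_flow_polytope n m" and ij: "1 \<le> i" "i \<le> n" "j \<le> m"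
  shows "Poly_Mapping.lookup f (horiz_edge (i, j)) + Poly_Mapping.lookup f (vert_edge n (i, j))
      - (if j = 0 then 0 else Poly_Mapping.lookup f (horiz_edge (i, j - 1)))
      - Poly_Mapping.lookup f (vert_edge n (i - 1, j))
    = (if j = 0 then 1 else if j = m then (if i = 1 then 0 else -1) else 0)"
proof -
  have "Grid i j \<in> G_verts n m"
    using ij by (auto simp: G_verts_def)
  then have "net_outflow n m f (Grid i j) = netflow_req n m (\<lambda>i. 1) (\<lambda>i. if i = 1 then 0 else 1) (Grid i j)"
    by (rule flow_polytopeD(3)[OF f])
  moreover have "\<forall>e. e \<notin> G_edges n m \<longrightarrow> Poly_Mapping.lookup f e = 0"
    using flow_polytopeD(1)[OF f] by blast
  ultimately show ?thesis
    using net_outflow_Grid[OF n _ ij] by (simp add: netflow_req_def)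
qed

definition vertical_flow :: "nat \<Rightarrow> (gvert \<times> gvert \<Rightarrow>\<^sub>0 real) \<Rightarrow> (nat \<times> nat \<Rightarrow>\<^sub>0 real)" where
  "vertical_flow n f = Poly_Mapping.map_key (vert_edge n) f"

lemma lookup_vertical_flow [simp]:
  "Poly_Mapping.lookup (vertical_flow n f) p = Poly_Mapping.lookup f (vert_edge n p)"
  unfolding vertical_flow_def Poly_Mapping.map_key.rep_eq[OF inj_vert_edge] by simp

lemma linear_vertical_flow: "linear (vertical_flow n)"
  by (rule linearI) (simp_all add: poly_mapping_eqI lookup_add)

definition row_prefix_sum :: "(nat \<times> nat \<Rightarrow>\<^sub>0 real) \<Rightarrow> nat \<Rightarrow> nat \<Rightarrow> real" where
  "row_prefix_sum y i j = (\<Sum>k\<le>j. Poly_Mapping.lookup y (i, k))"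

definition horiz_flow :: "(nat \<times> nat \<Rightarrow>\<^sub>0 real) \<Rightarrow> nat \<times> nat \<Rightarrow> real" where
  "horiz_flow y = (\<lambda>(i, j). 1 + row_prefix_sum y (i - 1) j - row_prefix_sum y i j)"

lemma grid_flow_polytope_horiz_edge:
  assumes "1 \<le> n" "f \<in> grid_flow_polytope n m" "1 \<le> i" "i \<le> n"
  shows "j < m \<Longrightarrow> Poly_Mapping.lookup f (horiz_edge (i, j)) = horiz_flow (vertical_flow n f) (i, j)"
proof (induction j)
  case 0
  then show ?case
    using grid_flow_polytope_conservation[OF assms, of 0]
    by (simp add: horiz_flow_def row_prefix_sum_def)
next
  case (Suc j)
  then show ?case
    using grid_flow_polytope_conservation[OF assms, of "Suc j"]
    by (simp add: horiz_flow_def row_prefix_sum_def)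
qed

lemma grid_flow_polytope_row_sum:
  assumes n: "1 \<le> n" and m: "1 \<le> m" and f: "f \<in> grid_flow_polytope n m"
  shows "1 \<le> i \<Longrightarrow> i \<le> n \<Longrightarrow> row_prefix_sum (vertical_flow n f) i m = 1"
proof (induction i)
  case 0
  then show ?case by simp
next
  case (Suc i)
  obtain k where k: "m = Suc k"
    using m by (cases m) auto
  have "Poly_Mapping.lookup f (horiz_edge (Suc i, m)) = 0" "row_prefix_sum (vertical_flow n f) 0 m = 0"
    using n by (simp_all add: row_prefix_sum_def flow_polytopeD(1)[OF f])
  then show ?case
    using Suc grid_flow_polytope_conservation[OF n f, of "Suc i" m]
      grid_flow_polytope_horiz_edge[OF n f, of "Suc i" k]
    by (cases "i = 0") (simp_all add: k horiz_flow_def row_prefix_sum_def)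
qed

lemma vertical_flow_in_simplex_product:
  assumes n: "1 \<le> n" and m: "1 \<le> m" and f: "f \<in> grid_flow_polytope n m"
  shows "vertical_flow n f \<in> simplex_product {1..n} {..m}"
  unfolding simplex_product_def
proof (intro CollectI conjI allI impI ballI)
  fix p :: "nat \<times> nat"
  show "p \<notin> {1..n} \<times> {..m} \<Longrightarrow> Poly_Mapping.lookup (vertical_flow n f) p = 0"
    using n by (cases p) (simp add: flow_polytopeD(1)[OF f])
  show "0 \<le> Poly_Mapping.lookup (vertical_flow n f) p"
    using flow_polytopeD(1,2)[OF f, of "vert_edge n p"] by (cases "vert_edge n p \<in> G_edges n m") auto
next
  fix i assume "i \<in> {1..n}"
  then show "(\<Sum>j\<in>{..m}. Poly_Mapping.lookup (vertical_flow n f) (i, j)) = 1"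
    using grid_flow_polytope_row_sum[OF n m f] by (simp add: row_prefix_sum_def)
qed

definition flow_of_vertical :: "nat \<Rightarrow> nat \<Rightarrow> (nat \<times> nat \<Rightarrow>\<^sub>0 real) \<Rightarrow> (gvert \<times> gvert \<Rightarrow>\<^sub>0 real)" where
  "flow_of_vertical n m y =
     (\<Sum>p\<in>{1..n} \<times> {..<m}. Poly_Mapping.single (horiz_edge p) (horiz_flow y p))
   + (\<Sum>p\<in>{1..n} \<times> {..m}. Poly_Mapping.single (vert_edge n p) (Poly_Mapping.lookup y p))"

lemma lookup_flow_of_vertical:
  shows "p \<in> {1..n} \<times> {..<m} \<Longrightarrow>
      Poly_Mapping.lookup (flow_of_vertical n m y) (horiz_edge p) = horiz_flow y p"
    and "p \<in> {1..n} \<times> {..m} \<Longrightarrow>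
      Poly_Mapping.lookup (flow_of_vertical n m y) (vert_edge n p) = Poly_Mapping.lookup y p"
    and "1 \<le> n \<Longrightarrow> e \<notin> G_edges n m \<Longrightarrow> Poly_Mapping.lookup (flow_of_vertical n m y) e = 0"
  by (auto simp: flow_of_vertical_def lookup_add G_edges_eq lookup_sum_single_notin image_iff
      lookup_sum_single_image inj_on_subset[OF inj_horiz_edge] inj_on_subset[OF inj_vert_edge])

lemma vertical_flow_of_vertical:
  assumes n: "1 \<le> n" and y: "y \<in> simplex_product {1..n} {..m}"
  shows "vertical_flow n (flow_of_vertical n m y) = y"
proof (rule poly_mapping_eqI)
  fix p :: "nat \<times> nat"
  show "Poly_Mapping.lookup (vertical_flow n (flow_of_vertical n m y)) p = Poly_Mapping.lookup y p"
  proof (cases "p \<in> {1..n} \<times> {..m}")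
    case True
    then show ?thesis
      by (simp add: lookup_flow_of_vertical(2))
  next
    case False
    then have "vert_edge n p \<notin> G_edges n m"
      using n by (cases p) auto
    with False show ?thesis
      using simplex_productD(1)[OF y] lookup_flow_of_vertical(3)[OF n] by simp
  qed
qed

lemma flow_of_vertical_flow:
  assumes n: "1 \<le> n" and f: "f \<in> grid_flow_polytope n m"
  shows "flow_of_vertical n m (vertical_flow n f) = f"
proof (rule poly_mapping_eqI)
  fix e
  show "Poly_Mapping.lookup (flow_of_vertical n m (vertical_flow n f)) e = Poly_Mapping.lookup f e"
  proof (cases "e \<in> G_edges n m")
    case True
    then consider (horiz) i j where "e = horiz_edge (i, j)" "(i, j) \<in> {1..n} \<times> {..<m}"
      | (vert) p where "e = vert_edge n p" "p \<in> {1..n} \<times> {..m}"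
      unfolding G_edges_eq[OF n] by auto
    then show ?thesis
      by cases (auto simp: lookup_flow_of_vertical grid_flow_polytope_horiz_edge[OF n f])
  next
    case False
    then show ?thesis
      by (simp add: lookup_flow_of_vertical(3)[OF n] flow_polytopeD(1)[OF f])
  qed
qed

lemma row_prefix_sum_Suc: "row_prefix_sum y i (Suc j) = row_prefix_sum y i j + Poly_Mapping.lookup y (i, Suc j)"
  by (simp add: row_prefix_sum_def)

lemma row_prefix_sum_simplex_product:
  assumes y: "y \<in> simplex_product I {..m}" and "j \<le> m"
  shows "0 \<le> row_prefix_sum y i j" and "row_prefix_sum y i j \<le> 1"
proof -
  show "0 \<le> row_prefix_sum y i j"
    unfolding row_prefix_sum_def by (rule sum_nonneg) (rule simplex_productD(2)[OF y])
  show "row_prefix_sum y i j \<le> 1"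
  proof (cases "i \<in> I")
    case True
    have "row_prefix_sum y i j \<le> (\<Sum>k\<le>m. Poly_Mapping.lookup y (i, k))"
      unfolding row_prefix_sum_def using assms(2)
      by (intro sum_mono2) (auto simp: simplex_productD(2)[OF y])
    with True show ?thesis
      using simplex_productD(3)[OF y] by simp
  next
    case False
    then show ?thesis
      by (simp add: row_prefix_sum_def simplex_productD(1)[OF y])
  qed
qed

lemma row_prefix_sum_last:
  assumes y: "y \<in> simplex_product {1..n} {..m}" and "i \<le> n"
  shows "row_prefix_sum y i m = (if i = 0 then 0 else 1)"
  using assms simplex_productD(1,3)[OF y] by (simp add: row_prefix_sum_def)

lemma lookup_flow_of_vertical_vert_edge:
  assumes "1 \<le> n" "y \<in> simplex_product {1..n} {..m}"
  shows "Poly_Mapping.lookup (flow_of_vertical n m y) (vert_edge n p) = Poly_Mapping.lookup y p"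
  using arg_cong[OF vertical_flow_of_vertical[OF assms], of "\<lambda>z. Poly_Mapping.lookup z p"] by simp

lemma flow_of_vertical_net_outflow_Grid:
  assumes n: "1 \<le> n" and m: "1 \<le> m" and y: "y \<in> simplex_product {1..n} {..m}"
    and ij: "1 \<le> i" "i \<le> n" "j \<le> m"
  shows "net_outflow n m (flow_of_vertical n m y) (Grid i j) =
    netflow_req n m (\<lambda>i. 1) (\<lambda>i. if i = 1 then 0 else 1) (Grid i j)"
proof -
  let ?f = "flow_of_vertical n m y"
  have horiz: "Poly_Mapping.lookup ?f (horiz_edge (i, k)) = (if k < m then horiz_flow y (i, k) else 0)" for k
    using ij lookup_flow_of_vertical(1)[of "(i, k)"] lookup_flow_of_vertical(3)[OF n] by simp
  have "net_outflow n m ?f (Grid i j) =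
      Poly_Mapping.lookup ?f (horiz_edge (i, j)) + Poly_Mapping.lookup y (i, j)
      - (if j = 0 then 0 else Poly_Mapping.lookup ?f (horiz_edge (i, j - 1))) - Poly_Mapping.lookup y (i - 1, j)"
    using net_outflow_Grid[OF n _ ij] lookup_flow_of_vertical(3)[OF n]
    by (simp add: lookup_flow_of_vertical_vert_edge[OF n y])
  also have "\<dots> = (if j = 0 then 1 else if j = m then - (if i = 1 then 0 else 1) else 0)"
  proof (cases j)
    case 0
    then show ?thesis
      using m by (simp add: horiz horiz_flow_def row_prefix_sum_def)
  next
    case (Suc k)
    have "i - 1 \<le> n"
      using ij by simp
    with Suc show ?thesis
      using ij row_prefix_sum_last[OF y ij(2)] row_prefix_sum_last[OF y \<open>i - 1 \<le> n\<close>]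
      by (auto simp: horiz horiz_flow_def row_prefix_sum_Suc)
  qed
  finally show ?thesis
    by (simp add: netflow_req_def)
qed

lemma flow_of_vertical_net_outflow_Sink:
  assumes n: "1 \<le> n" and y: "y \<in> simplex_product {1..n} {..m}"
  shows "net_outflow n m (flow_of_vertical n m y) Sink =
    netflow_req n m (\<lambda>i. 1) (\<lambda>i. if i = 1 then 0 else 1) Sink"
proof -
  have "(\<Sum>i=1..n. if i = 1 then 0 else 1 :: real) = real n - 1"
    using n by (simp add: sum.atLeast_Suc_atMost)
  moreover have "(\<Sum>j\<le>m. Poly_Mapping.lookup y (n, j)) = 1"
    using n simplex_productD(3)[OF y, of n] by simp
  ultimately show ?thesis
    by (simp add: net_outflow_Sink[OF n] netflow_req_def lookup_flow_of_vertical_vert_edge[OF n y])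
qed

lemma flow_of_vertical_in_grid_flow_polytope:
  assumes n: "1 \<le> n" and m: "1 \<le> m" and y: "y \<in> simplex_product {1..n} {..m}"
  shows "flow_of_vertical n m y \<in> grid_flow_polytope n m"
  unfolding flow_polytope_iff
proof (intro conjI allI impI ballI)
  let ?f = "flow_of_vertical n m y"
  fix e
  show "e \<notin> G_edges n m \<Longrightarrow> Poly_Mapping.lookup ?f e = 0"
    by (rule lookup_flow_of_vertical(3)[OF n])
  assume "e \<in> G_edges n m"
  then consider (horiz) i j where "e = horiz_edge (i, j)" "(i, j) \<in> {1..n} \<times> {..<m}"
    | (vert) p where "e = vert_edge n p" "p \<in> {1..n} \<times> {..m}"
    unfolding G_edges_eq[OF n] by auto
  then show "0 \<le> Poly_Mapping.lookup ?f e"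
  proof cases
    case horiz
    then show ?thesis
      using row_prefix_sum_simplex_product[OF y, of j "i - 1"] row_prefix_sum_simplex_product[OF y, of j i]
      by (simp add: lookup_flow_of_vertical horiz_flow_def)
  next
    case vert
    then show ?thesis
      by (simp add: lookup_flow_of_vertical simplex_productD(2)[OF y])
  qed
next
  fix v assume "v \<in> G_verts n m"
  then show "net_outflow n m (flow_of_vertical n m y) v =
      netflow_req n m (\<lambda>i. 1) (\<lambda>i. if i = 1 then 0 else 1) v"
    using flow_of_vertical_net_outflow_Grid[OF n m y] flow_of_vertical_net_outflow_Sink[OF n y]
    by (auto simp: G_verts_def)
qed

lemma convex_flow_polytope: "convex (flow_polytope n m a b)"
proof (rule convexI)
  fix f g :: "gvert \<times> gvert \<Rightarrow>\<^sub>0 real" and u v :: real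
  assume f: "f \<in> flow_polytope n m a b" and g: "g \<in> flow_polytope n m a b"
    and uv: "0 \<le> u" "0 \<le> v" "u + v = 1"
  have lookup: "Poly_Mapping.lookup (u *\<^sub>R f + v *\<^sub>R g) e = u * Poly_Mapping.lookup f e + v * Poly_Mapping.lookup g e" for e
    by (simp add: lookup_add)
  have "net_outflow n m (u *\<^sub>R f + v *\<^sub>R g) w = u * net_outflow n m f w + v * net_outflow n m g w" for w
    by (simp add: net_outflow_def lookup sum.distrib sum_distrib_left algebra_simps)
  then show "u *\<^sub>R f + v *\<^sub>R g \<in> flow_polytope n m a b"
    using f g uv unfolding flow_polytope_iff
    by (simp add: lookup) (metis distrib_right mult_1 add_nonneg_nonneg mult_nonneg_nonneg)
qed

lemma num_vertices_grid_flow_polytope: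
  assumes n: "1 \<le> n"
  shows "num_vertices n m (\<lambda>i. 1) (\<lambda>i. if i = 1 then 0 else 1) = Suc m ^ n"
proof (cases "m = 0")
  case True
  then show ?thesis
    by (simp add: num_vertices_def)
next
  case False
  then have m: "1 \<le> m"
    by simp
  have inj: "inj_on (vertical_flow n) (grid_flow_polytope n m)"
    by (rule inj_on_inverseI[of _ "flow_of_vertical n m"]) (rule flow_of_vertical_flow[OF n])
  have image: "vertical_flow n ` grid_flow_polytope n m = simplex_product {1..n} {..m}"
  proof (intro equalityI subsetI)
    fix y assume "y \<in> simplex_product {1..n} {..m}"
    then show "y \<in> vertical_flow n ` grid_flow_polytope n m"
      using vertical_flow_of_vertical[OF n] flow_of_vertical_in_grid_flow_polytope[OF n m]
      by (metis image_eqI)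
  qed (use vertical_flow_in_simplex_product[OF n m] in auto)
  have "card {f. f extreme_point_of grid_flow_polytope n m}
      = card (vertical_flow n ` {f. f extreme_point_of grid_flow_polytope n m})"
    by (rule card_image[symmetric], rule inj_on_subset[OF inj]) (auto simp: extreme_point_of_def)
  also have "\<dots> = card {y. y extreme_point_of vertical_flow n ` grid_flow_polytope n m}"
    unfolding extreme_points_of_linear_image[OF linear_vertical_flow inj convex_flow_polytope] ..
  also have "\<dots> = card {y. y extreme_point_of simplex_product {1..n} {..m}}"
    unfolding image ..
  also have "\<dots> = Suc m ^ n"
    by (simp add: card_extreme_points_simplex_product)
  finally show ?thesis
    using False by (simp add: num_vertices_def)
qed

theorem proposition7p8:
  fixes n :: nat
  assumes "n \<ge> 1"
  shows "Abs_fps (\<lambda>m. real (num_vertices n m (\<lambda>i. 1) (\<lambda>i. if i = 1 then 0 else 1)))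
       = fps_of_poly (\<Sum>k=1..n. monom (real (eulerian n k)) (k - 1)) / (1 - fps_X) ^ (n + 1)"
proof -
  have "fps_nth ((1 - fps_X :: real fps) ^ (n + 1)) 0 = 1"
    by (simp add: fps_nth_power_0)
  then have nonzero: "(1 - fps_X :: real fps) ^ (n + 1) \<noteq> 0"
    by auto
  have "Abs_fps (\<lambda>m. real (num_vertices n m (\<lambda>i. 1) (\<lambda>i. if i = 1 then 0 else 1))) = succ_pow_fps n"
    unfolding succ_pow_fps_def num_vertices_grid_flow_polytope[OF assms] by simp
  also have "\<dots> = succ_pow_fps n * (1 - fps_X) ^ (n + 1) / (1 - fps_X) ^ (n + 1)"
    using nonzero by simp
  also have "\<dots> = fps_of_poly (\<Sum>k=1..n. monom (real (eulerian n k)) (k - 1)) / (1 - fps_X) ^ (n + 1)"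
    unfolding fps_of_poly_eulerian[OF assms] Suc_eq_plus1[symmetric] succ_pow_fps_times_power ..
  finally show ?thesis .
qed

end
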